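(* Let $F$ be a distribution on $[0,\infty)$ with unbounded support and let $\gamma\ge0$. Then $F\in\mathcal S(\gamma)$ if and only if the following three conditions hold: (a) $\gamma=\hat\gamma$; (b) for some $c\in[2,\infty)$, $\overline{F*F}(x)\sim c\,\overline{F}(x)$ as $x\to\infty$; (c) for every fixed real $y$, $$\liminf_{x\to\infty}\frac{\overline{F}(x-y)}{\overline{F}(x)}\ge e^{\gamma y}.$$
   Context: $\overline{F}(x)=F(x,\infty)$, positive for all $x$ (unbounded support). $\varphi(\gamma)=\int_0^\infty e^{\gamma x}F(dx)\in(0,\infty]$; $\hat\gamma=\sup\{\gamma:\varphi(\gamma)<\infty\}$. For $\gamma\ge0$, $F$ belongs to $\mathcal S(\gamma)$ if (i) $\varphi(\gamma)<\infty$; (ii) for every fixed $y$, $\overline{F}(x+y)/\overline{F}(x)\to e^{-\gamma y}$ as $x\to\infty$; (iii) $\overline{F*F}(x)\sim 2\varphi(\gamma)\overline{F}(x)$ as $x\to\infty$. *)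

theory Defs
  imports "HOL-Probability.Probability" "HOL-Library.Landau_Symbols"
begin

definition tail :: "real measure \<Rightarrow> real \<Rightarrow> real" where
  "tail F x = measure F {x<..}"

definition mgf :: "real measure \<Rightarrow> real \<Rightarrow> ennreal" where
  "mgf F \<gamma> = (\<integral>\<^sup>+ x. ennreal (exp (\<gamma> * x)) \<partial>F)"

definition gamma_hat :: "real measure \<Rightarrow> ereal" where
  "gamma_hat F = Sup {ereal \<gamma> | \<gamma>. mgf F \<gamma> < \<infinity>}"

definition class_S :: "real \<Rightarrow> real measure \<Rightarrow> bool" where
  "class_S \<gamma> F \<longleftrightarrow>
     mgf F \<gamma> < \<infinity> \<and>
     (\<forall>y::real. ((\<lambda>x. tail F (x + y) / tail F x) \<longlongrightarrow> exp (- \<gamma> * y)) at_top) \<and>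
     (\<lambda>x. tail (F \<star> F) x) \<sim>[at_top] (\<lambda>x. 2 * enn2real (mgf F \<gamma>) * tail F x)"

end

theory Submission
  imports Defs
begin

text \<open>
  Write \<open>\<phi>\<close> for \<open>mgf F\<close> and \<open>Fbar\<^sub>2\<close> for the tail of \<open>F \<star> F\<close>. If \<open>F \<in> S(\<gamma>)\<close>, the limit
  \<open>Fbar (x + 1) / Fbar x \<rightarrow> exp (- \<gamma>)\<close> makes the tail decay more slowly than \<open>exp (- s * x)\<close>
  for every \<open>s > \<gamma>\<close>, so \<open>\<phi> s = \<infinity>\<close> and \<open>\<gamma> = \<gamma>hat\<close>; the constant is \<open>2 * \<phi> \<gamma> \<ge> 2\<close>.

  Conversely, the liminf bounds at \<open>y\<close> and \<open>- y\<close> together give \<open>Fbar (x + y) / Fbar x \<rightarrow> exp (- \<gamma> * y)\<close>,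
  and it remains to show \<open>c = 2 * \<phi> \<gamma> < \<infinity>\<close>. Tail bounds between \<open>F \<star> F\<close> and \<open>F\<close> transfer to
  integrals of monotone functions (layer cake). With \<open>Fbar\<^sub>2 \<le> C * Fbar\<close> this gives
  \<open>\<phi> s\<^sup>2 \<le> exp (s * x0) + C * \<phi> s\<close> uniformly in \<open>s < \<gamma>\<close>, hence \<open>\<phi> \<gamma> < \<infinity>\<close>. Fatou's lemma, applied to
  the part of \<open>F \<star> F\<close> where one summand stays below \<open>x / 3\<close>, gives \<open>2 * \<phi> \<gamma> \<le> c\<close>. For
  \<open>c \<le> 2 * \<phi> \<gamma>\<close> let \<open>d\<close> be the integral of the truncated excess tilt
  \<open>exp (\<gamma> * z) * (exp (l * min z T) - 1)\<close>: submultiplicativity bounds its \<open>F \<star> F\<close>-integral by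
  \<open>2 * \<phi> \<gamma> * d + d\<^sup>2\<close>, while \<open>Fbar\<^sub>2 \<ge> c' * Fbar\<close> bounds it below by \<open>c' * d\<close> up to an error that is
  small for small \<open>l\<close>. If \<open>c' > 2 * \<phi> \<gamma>\<close> this fails once \<open>d\<close> is of order \<open>c' - 2 * \<phi> \<gamma>\<close>, and \<open>d\<close>
  passes through that range in small steps as \<open>T\<close> grows, because \<open>\<phi> (\<gamma> + l) = \<infinity>\<close>.
\<close>

lemma superlevel_set_mono_continuous:
  fixes k :: "real \<Rightarrow> real"
  assumes mono: "mono k" and cont: "continuous_on UNIV k" and t: "k x0 \<le> t"
  obtains "{x. t < k x} = {}" | a where "x0 \<le> a" "{x. t < k x} = {a<..}"
proof (cases "{x. t < k x} = {}")
  case False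
  define U where "U = {x. t < k x}"
  have ne: "U \<noteq> {}" using False by (simp add: U_def)
  have lower: "x0 < x" if "x \<in> U" for x
    using that t monoD[OF mono, of x x0] by (force simp: U_def)
  then have bdd: "bdd_below U"
    by (meson bdd_belowI less_imp_le)
  have "open U"
    unfolding U_def by (rule open_Collect_less) (auto intro: continuous_intros cont)
  have "Inf U \<notin> U"
  proof
    assume "Inf U \<in> U"
    then obtain e where "e > 0" "ball (Inf U) e \<subseteq> U"
      using \<open>open U\<close> open_contains_ball by blast
    then have "Inf U - e/2 \<in> U" by (auto simp: dist_real_def)
    then have "Inf U \<le> Inf U - e/2" using bdd by (rule cInf_lower)
    with \<open>e > 0\<close> show False by simp
  qed
  have "U = {Inf U<..}"
  proof safe
    fix x assume "x \<in> U"
    with bdd \<open>Inf U \<notin> U\<close> show "Inf U < x" by (metis cInf_lower order_le_imp_less_or_eq)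
  next
    fix x assume "Inf U < x"
    then obtain u where "u \<in> U" "u < x" using cInf_lessD[OF ne] by blast
    then show "x \<in> U" using monoD[OF mono, of u x] by (auto simp: U_def)
  qed
  moreover have "x0 \<le> Inf U"
    using ne lower by (meson cInf_greatest less_imp_le)
  ultimately show ?thesis using that(2) by (simp add: U_def)
qed (rule that(1))

lemma nn_integral_layer_cake:
  assumes "sigma_finite_measure M" and f[measurable]: "f \<in> borel_measurable M"
    and nonneg: "\<And>x. x \<in> space M \<Longrightarrow> 0 \<le> f x"
  shows "(\<integral>\<^sup>+x. ennreal (f x) \<partial>M) = (\<integral>\<^sup>+t\<in>{0..}. emeasure M {x\<in>space M. t < f x} \<partial>lborel)"
proof -
  interpret M: sigma_finite_measure M by fact
  interpret pair_sigma_finite M lborel ..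
  define A where "A = {p\<in>space M \<times> UNIV. 0 \<le> snd p \<and> snd p < f (fst p)}"
  have [measurable]: "A \<in> sets (M \<Otimes>\<^sub>M lborel)"
    unfolding A_def by (simp add: space_pair_measure[symmetric])
  have "(\<integral>\<^sup>+x. ennreal (f x) \<partial>M) = (\<integral>\<^sup>+x. \<integral>\<^sup>+t. indicator A (x, t) \<partial>lborel \<partial>M)"
  proof (rule nn_integral_cong)
    fix x assume "x \<in> space M"
    then have "indicator A (x, t) = (indicator {0..<f x} t :: ennreal)" for t
      by (auto simp: A_def indicator_def)
    then show "ennreal (f x) = (\<integral>\<^sup>+t. indicator A (x, t) \<partial>lborel)"
      using nonneg[OF \<open>x \<in> space M\<close>] by simp
  qed
  also have "\<dots> = (\<integral>\<^sup>+t. \<integral>\<^sup>+x. indicator A (x, t) \<partial>M \<partial>lborel)"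
    by (rule Fubini'[symmetric]) measurable
  also have "\<dots> = (\<integral>\<^sup>+t\<in>{0..}. emeasure M {x\<in>space M. t < f x} \<partial>lborel)"
  proof (rule nn_integral_cong)
    fix t :: real
    have "(\<integral>\<^sup>+x. indicator A (x, t) \<partial>M) = (\<integral>\<^sup>+x. indicator {x\<in>space M. t < f x} x * indicator {0..} t \<partial>M)"
      by (rule nn_integral_cong) (auto simp: A_def indicator_def)
    then show "(\<integral>\<^sup>+x. indicator A (x, t) \<partial>M) = emeasure M {x\<in>space M. t < f x} * indicator {0..} t"
      by (simp add: nn_integral_multc)
  qed
  finally show ?thesis .
qed

lemma measurable_emeasure_superlevel_set:
  assumes "sigma_finite_measure M" and [measurable]: "f \<in> borel_measurable M"
  shows "(\<lambda>t::real. emeasure M {x\<in>space M. t < f x}) \<in> borel_measurable borel"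
proof -
  interpret sigma_finite_measure M by fact
  show ?thesis
    by (rule measurable_emeasure) (auto simp: space_pair_measure[symmetric])
qed

lemma nn_integral_le_if_tail_le:
  fixes k :: "real \<Rightarrow> real" and c d :: ennreal
  assumes M: "finite_measure M" "sets M = sets borel"
    and N: "finite_measure N" "sets N = sets borel"
    and k: "mono k" "continuous_on UNIV k" "\<And>x. 0 \<le> k x"
    and tail: "\<And>a. x0 \<le> a \<Longrightarrow> c * emeasure M {a<..} \<le> d * emeasure N {a<..}"
  shows "c * (\<integral>\<^sup>+x. k x \<partial>M) \<le> c * emeasure M (space M) * k x0 + d * (\<integral>\<^sup>+x. k x \<partial>N)"
proof -
  interpret M: finite_measure M by fact
  interpret N: finite_measure N by fact
  have space: "space M = UNIV" "space N = UNIV"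
    using sets_eq_imp_space_eq[OF M(2)] sets_eq_imp_space_eq[OF N(2)] by simp_all
  have [measurable]: "k \<in> borel_measurable borel"
    using k(2) by (rule borel_measurable_continuous_onI)
  have kM: "k \<in> borel_measurable M" and kN: "k \<in> borel_measurable N"
    using M(2) N(2) by (simp_all cong: measurable_cong_sets)
  have [measurable]: "(\<lambda>t. emeasure M {x. t < k x}) \<in> borel_measurable borel"
    "(\<lambda>t. emeasure N {x. t < k x}) \<in> borel_measurable borel"
    using measurable_emeasure_superlevel_set[OF M.sigma_finite_measure kM]
      measurable_emeasure_superlevel_set[OF N.sigma_finite_measure kN] by (simp_all add: space)
  have "c * (\<integral>\<^sup>+x. k x \<partial>M) = (\<integral>\<^sup>+t. c * (emeasure M {x. t < k x} * indicator {0..} t) \<partial>lborel)"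
    using nn_integral_layer_cake[OF M.sigma_finite_measure kM] k(3)
    by (simp add: space nn_integral_cmult)
  also have "\<dots> \<le> (\<integral>\<^sup>+t. c * emeasure M (space M) * indicator {0..<k x0} t
                        + d * (emeasure N {x. t < k x} * indicator {0..} t) \<partial>lborel)"
  proof (rule nn_integral_mono)
    fix t :: real
    consider "t < 0" | "0 \<le> t" "t < k x0" | "0 \<le> t" "k x0 \<le> t" by linarith
    then show "c * (emeasure M {x. t < k x} * indicator {0..} t)
        \<le> c * emeasure M (space M) * indicator {0..<k x0} t + d * (emeasure N {x. t < k x} * indicator {0..} t)"
    proof cases
      case 2
      then show ?thesis
        using emeasure_space[of M "{x. t < k x}"] by (simp add: mult_left_mono add_increasing2)
    next
      case 3
      have "c * emeasure M {x. t < k x} \<le> d * emeasure N {x. t < k x}"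
        by (rule superlevel_set_mono_continuous[OF k(1,2) 3(2)]) (auto intro: tail)
      with 3 show ?thesis by (simp add: add_increasing mult.assoc)
    qed simp
  qed
  also have "\<dots> = c * emeasure M (space M) * k x0 + d * (\<integral>\<^sup>+x. k x \<partial>N)"
    using nn_integral_layer_cake[OF N.sigma_finite_measure kN] k(3)
    by (simp add: nn_integral_add nn_integral_cmult space)
  finally show ?thesis .
qed

lemma tendsto_shift_ratio_if_Liminf_ge:
  fixes f :: "real \<Rightarrow> real"
  assumes pos: "\<And>x. 0 < f x"
    and Liminf: "\<And>y. ereal (exp (g * y)) \<le> Liminf at_top (\<lambda>x. ereal (f (x - y) / f x))"
  shows "((\<lambda>x. f (x + y) / f x) \<longlongrightarrow> exp (- g * y)) at_top"
proof (rule order_tendstoI)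
  fix a assume "a < exp (- g * y)"
  then have "ereal a < ereal (exp (g * - y))"
    by simp
  with Liminf[of "- y"] have "eventually (\<lambda>x. ereal a < ereal (f (x - - y) / f x)) at_top"
    unfolding le_Liminf_iff by blast
  then show "eventually (\<lambda>x. a < f (x + y) / f x) at_top"
    by simp
next
  fix a assume a: "exp (- g * y) < a"
  then have "0 < a" by (meson exp_gt_zero less_trans)
  \<comment> \<open>the lower bound at \<open>y\<close>, read at the point \<open>x + y\<close>, bounds the reciprocal ratio\<close>
  have "ereal (1 / a) < ereal (exp (g * y))"
    using a \<open>0 < a\<close> by (simp add: exp_minus field_simps)
  with Liminf[of y] have "eventually (\<lambda>x. ereal (1 / a) < ereal (f (x - y) / f x)) at_top"
    unfolding le_Liminf_iff by blast
  then obtain N where N: "\<And>x. N \<le> x \<Longrightarrow> 1 / a < f (x - y) / f x"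
    by (auto simp: eventually_at_top_linorder)
  show "eventually (\<lambda>x. f (x + y) / f x < a) at_top"
    unfolding eventually_at_top_linorder
  proof (intro exI allI impI)
    fix x assume "N - y \<le> x"
    then have "1 / a < f x / f (x + y)"
      using N[of "x + y"] by simp
    then show "f (x + y) / f x < a"
      using \<open>0 < a\<close> pos[of x] pos[of "x + y"] by (simp add: field_simps)
  qed
qed

lemma gamma_hat_eqI:
  assumes "mgf F \<gamma> < \<infinity>" and "\<And>s. \<gamma> < s \<Longrightarrow> mgf F s = \<infinity>"
  shows "gamma_hat F = ereal \<gamma>"
  unfolding gamma_hat_def
proof (rule antisym)
  show "Sup {ereal s |s. mgf F s < \<infinity>} \<le> ereal \<gamma>"
    using assms(2) by (intro Sup_least) (force simp: not_le[symmetric])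
  show "ereal \<gamma> \<le> Sup {ereal s |s. mgf F s < \<infinity>}"
    using assms(1) by (intro Sup_upper) auto
qed

lemma mgf_infinite_above_gamma_hat:
  assumes "gamma_hat F = ereal \<gamma>" and "\<gamma> < s"
  shows "mgf F s = \<infinity>"
proof (rule ccontr)
  assume "mgf F s \<noteq> \<infinity>"
  then have "ereal s \<le> gamma_hat F"
    unfolding gamma_hat_def by (intro Sup_upper) (auto simp: top.not_eq_extremum)
  with assms show False by simp
qed

lemma exists_crossing:
  fixes d :: "nat \<Rightarrow> real"
  assumes "d 0 < a" and "a \<le> d N" and step: "\<And>n. d n < a \<Longrightarrow> d (Suc n) \<le> b"
  obtains n where "a \<le> d n" "d n \<le> b"
proof -
  define n where "n = (LEAST n. a \<le> d n)"
  have "a \<le> d n"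
    unfolding n_def using assms(2) by (rule LeastI)
  moreover from this obtain m where m: "n = Suc m"
    using assms(1) by (cases n) auto
  then have "d m < a"
    using not_less_Least[of m "\<lambda>n. a \<le> d n"] by (simp add: n_def)
  ultimately show ?thesis
    using that step m by blast
qed

lemma eventually_at_top_nonnegE:
  fixes P :: "real \<Rightarrow> bool"
  assumes "eventually P at_top"
  obtains x0 where "0 \<le> x0" "\<And>a. x0 \<le> a \<Longrightarrow> P a"
proof -
  obtain x1 where "\<And>a. x1 \<le> a \<Longrightarrow> P a"
    using assms unfolding eventually_at_top_linorder by blast
  then show ?thesis
    using that[of "max x1 0"] by simp
qed

lemma geometric_lower_bound:
  fixes f :: "real \<Rightarrow> real"
  assumes "0 \<le> q" and step: "\<And>x. N \<le> x \<Longrightarrow> q * f x \<le> f (x + 1)"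
  shows "q ^ m * f N \<le> f (N + real m)"
proof (induction m)
  case (Suc m)
  have "q ^ Suc m * f N \<le> q * f (N + real m)"
    using Suc \<open>0 \<le> q\<close> by (simp add: mult.assoc mult_left_mono)
  also have "\<dots> \<le> f (N + real m + 1)"
    using step[of "N + real m"] by simp
  finally show ?case
    by (simp add: ac_simps)
qed simp

lemma exists_small_exp_increment:
  fixes A B x \<epsilon> :: real
  assumes "0 < \<epsilon>"
  obtains l where "0 < l" "(exp l - 1) * A < \<epsilon>" "(exp (l * x) - 1) * B < \<epsilon>"
proof -
  have "eventually (\<lambda>l. (exp l - 1) * A < \<epsilon>) (at_right 0)"
    by (rule order_tendstoD(2)) (auto intro!: tendsto_eq_intros simp: assms)
  moreover have "eventually (\<lambda>l. (exp (l * x) - 1) * B < \<epsilon>) (at_right 0)"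
    by (rule order_tendstoD(2)) (auto intro!: tendsto_eq_intros simp: assms)
  moreover have "eventually (\<lambda>l. 0 < l) (at_right (0::real))"
    by (rule eventually_at_right_less)
  ultimately have "eventually (\<lambda>l. 0 < l \<and> (exp l - 1) * A < \<epsilon> \<and> (exp (l * x) - 1) * B < \<epsilon>) (at_right 0)"
    by eventually_elim blast
  then show ?thesis
    using that eventually_happens'[of "at_right (0::real)"] by auto
qed

lemma tendsto_ratio_if_asymp_equiv:
  fixes f g :: "'a \<Rightarrow> real"
  assumes "f \<sim>[F] (\<lambda>x. c * g x)" "c \<noteq> 0" "\<And>x. g x \<noteq> 0"
  shows "((\<lambda>x. f x / g x) \<longlongrightarrow> c) F"
proof -
  have "((\<lambda>x. f x / (c * g x)) \<longlongrightarrow> 1) F"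
    using assms by (intro asymp_equivD_strong) auto
  then have "((\<lambda>x. c * (f x / (c * g x))) \<longlongrightarrow> c * 1) F"
    by (rule tendsto_mult_left)
  then show ?thesis
    using assms(2) by simp
qed

text \<open>For \<open>z \<ge> 0\<close>, \<open>exp (g * z) + tilt_excess g l T z = exp (g * z) * exp (l * min z T)\<close>
  is the tilt \<open>exp ((g + l) * z)\<close> with the extra factor frozen beyond \<open>T\<close>.\<close>
definition tilt_excess :: "real \<Rightarrow> real \<Rightarrow> real \<Rightarrow> real \<Rightarrow> real" where
  "tilt_excess g l T z = exp (g * z) * (exp (l * min (max z 0) T) - 1)"

lemma continuous_on_tilt_excess: "continuous_on UNIV (tilt_excess g l T)"
  unfolding tilt_excess_def by (intro continuous_intros)

context
  fixes g l :: real
  assumes l: "0 \<le> l"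
begin

lemma tilt_excess_nonneg: "0 \<le> T \<Longrightarrow> 0 \<le> tilt_excess g l T z"
  using l by (simp add: tilt_excess_def)

lemma mono_tilt_excess: "0 \<le> T \<Longrightarrow> 0 \<le> g \<Longrightarrow> mono (tilt_excess g l T)"
  unfolding tilt_excess_def using l
  by (intro monoI mult_mono) (auto intro!: mult_left_mono)

lemma tilt_excess_le: "0 \<le> z \<Longrightarrow> tilt_excess g l T z \<le> exp (g * z) * (exp (l * z) - 1)"
  unfolding tilt_excess_def using l by (intro mult_left_mono) (auto intro!: mult_left_mono)

lemma tilt_excess_le_truncation: "tilt_excess g l T z \<le> exp (g * z) * (exp (l * T) - 1)"
  unfolding tilt_excess_def using l by (intro mult_left_mono) (auto intro!: mult_left_mono)

lemma tilt_excess_add_one_le: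
  "tilt_excess g l (T + 1) z \<le> exp l * tilt_excess g l T z + (exp l - 1) * exp (g * z)"
proof -
  have "min (max z 0) (T + 1) \<le> 1 + min (max z 0) T"
    by linarith
  then have "l * min (max z 0) (T + 1) \<le> l + l * min (max z 0) T"
    using l by (metis distrib_left mult.right_neutral mult_left_mono)
  then have "exp (l * min (max z 0) (T + 1)) - 1 \<le> exp l * (exp (l * min (max z 0) T) - 1) + (exp l - 1)"
    by (simp add: algebra_simps flip: exp_add)
  then show ?thesis
    unfolding tilt_excess_def by (simp add: algebra_simps mult_left_mono)
qed

lemma exp_plus_tilt_excess_submult:
  assumes "0 \<le> T" "0 \<le> x" "0 \<le> y"
  shows "exp (g * (x + y)) + tilt_excess g l T (x + y)
    \<le> (exp (g * x) + tilt_excess g l T x) * (exp (g * y) + tilt_excess g l T y)"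
proof -
  have "l * min (x + y) T \<le> l * min x T + l * min y T"
    using assms l by (simp add: mult_left_mono flip: distrib_left)
  then have "exp (l * min (x + y) T) \<le> exp (l * min x T) * exp (l * min y T)"
    by (simp flip: exp_add)
  then show ?thesis
    using assms by (simp add: tilt_excess_def algebra_simps exp_add mult_left_mono)
qed

end

lemma tilt_excess_eventually_eq:
  "eventually (\<lambda>n. tilt_excess g l (real n) z = exp (g * z) * (exp (l * max z 0) - 1)) sequentially"
proof -
  obtain N :: nat where "max z 0 \<le> real N"
    using real_arch_simple by blast
  then show ?thesis
    unfolding eventually_sequentially tilt_excess_def
    by (intro exI[of _ N] allI impI) (simp add: min_absorb1)
qed

locale unbounded_nonneg_distribution = prob_space F for F :: "real measure" +
  assumes sets_F[simp, measurable_cong]: "sets F = sets borel"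
    and nonneg: "emeasure F {..<0} = 0"
    and tail_pos: "\<And>x. 0 < tail F x"
begin

lemma space_F[simp]: "space F = UNIV"
  using sets_eq_imp_space_eq[OF sets_F] by simp

lemma AE_nonneg: "AE x in F. 0 \<le> x"
  by (rule AE_I'[of "{..<0}"]) (auto simp: null_sets_def nonneg)

lemma emeasure_Ioi: "emeasure F {a<..} = ennreal (tail F a)"
  by (simp add: tail_def emeasure_eq_measure)

lemma tail_antimono: "a \<le> b \<Longrightarrow> tail F b \<le> tail F a"
  unfolding tail_def by (rule finite_measure_mono) auto

lemma borel_measurable_tail_shift[measurable]: "(\<lambda>y. tail F (x - y)) \<in> borel_measurable borel"
  by (rule borel_measurable_mono) (auto simp: mono_def intro: tail_antimono)

lemma finite_measure_convolution: "finite_measure (F \<star> F)"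
  by (rule convolution_finite) (auto simp: finite_measure_axioms)

lemma prob_space_convolution: "prob_space (F \<star> F)"
proof -
  interpret pair_prob_space F F ..
  show ?thesis
    unfolding convolution_def by (rule prob_space_distr) simp
qed

lemma emeasure_convolution_Ioi: "emeasure (F \<star> F) {a<..} = ennreal (tail (F \<star> F) a)"
  by (simp add: tail_def finite_measure.emeasure_eq_measure[OF finite_measure_convolution])

lemma nn_integral_convolution_self:
  "f \<in> borel_measurable borel \<Longrightarrow> (\<integral>\<^sup>+z. f z \<partial>(F \<star> F)) = (\<integral>\<^sup>+x. \<integral>\<^sup>+y. f (x + y) \<partial>F \<partial>F)"
  by (rule nn_integral_convolution) (auto simp: finite_measure_axioms)

lemma nn_integral_convolution_le_mult:
  assumes [measurable]: "f \<in> borel_measurable borel" "g \<in> borel_measurable borel" "h \<in> borel_measurable borel"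
    and le: "\<And>x y. 0 \<le> x \<Longrightarrow> 0 \<le> y \<Longrightarrow> f (x + y) \<le> g x * h y"
  shows "(\<integral>\<^sup>+z. f z \<partial>(F \<star> F)) \<le> (\<integral>\<^sup>+x. g x \<partial>F) * (\<integral>\<^sup>+y. h y \<partial>F)"
proof -
  have "(\<integral>\<^sup>+y. f (x + y) \<partial>F) \<le> (\<integral>\<^sup>+y. g x * h y \<partial>F)" if "0 \<le> x" for x
    by (intro nn_integral_mono_AE AE_mp[OF AE_nonneg AE_I2] impI le that)
  then have "(\<integral>\<^sup>+x. \<integral>\<^sup>+y. f (x + y) \<partial>F \<partial>F) \<le> (\<integral>\<^sup>+x. \<integral>\<^sup>+y. g x * h y \<partial>F \<partial>F)"
    by (intro nn_integral_mono_AE AE_mp[OF AE_nonneg AE_I2]) auto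
  then show ?thesis
    by (simp add: nn_integral_convolution_self nn_integral_cmult nn_integral_multc)
qed

lemma nn_integral_convolution_eq_mult:
  assumes [measurable]: "f \<in> borel_measurable borel" "g \<in> borel_measurable borel" "h \<in> borel_measurable borel"
    and eq: "\<And>x y. 0 \<le> x \<Longrightarrow> 0 \<le> y \<Longrightarrow> f (x + y) = g x * h y"
  shows "(\<integral>\<^sup>+z. f z \<partial>(F \<star> F)) = (\<integral>\<^sup>+x. g x \<partial>F) * (\<integral>\<^sup>+y. h y \<partial>F)"
proof -
  have "(\<integral>\<^sup>+y. f (x + y) \<partial>F) = (\<integral>\<^sup>+y. g x * h y \<partial>F)" if "0 \<le> x" for x
    by (intro nn_integral_cong_AE AE_mp[OF AE_nonneg AE_I2] impI eq that)
  then have "(\<integral>\<^sup>+x. \<integral>\<^sup>+y. f (x + y) \<partial>F \<partial>F) = (\<integral>\<^sup>+x. \<integral>\<^sup>+y. g x * h y \<partial>F \<partial>F)"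
    by (intro nn_integral_cong_AE AE_mp[OF AE_nonneg AE_I2]) auto
  then show ?thesis
    by (simp add: nn_integral_convolution_self nn_integral_cmult nn_integral_multc)
qed

lemma mgf_eq_max: "mgf F s = (\<integral>\<^sup>+x. ennreal (exp (s * max x 0)) \<partial>F)"
  unfolding mgf_def by (intro nn_integral_cong_AE AE_mp[OF AE_nonneg AE_I2]) auto

lemma mgf_convolution: "mgf (F \<star> F) s = mgf F s * mgf F s"
  unfolding mgf_def
  by (rule nn_integral_convolution_eq_mult) (auto simp: distrib_left exp_add ennreal_mult)

lemma mgf_zero: "mgf F 0 = 1"
  using emeasure_space_1 by (simp add: mgf_def)

lemma mgf_mono: "s \<le> s' \<Longrightarrow> mgf F s \<le> mgf F s'"
  unfolding mgf_def
  by (intro nn_integral_mono_AE AE_mp[OF AE_nonneg AE_I2]) (auto intro!: mult_right_mono)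

lemma one_le_mgf: "0 \<le> s \<Longrightarrow> 1 \<le> mgf F s"
  using mgf_mono[of 0 s] by (simp add: mgf_zero)

lemma mgf_finite_below_gamma_hat:
  assumes "gamma_hat F = ereal \<gamma>" and "s < \<gamma>"
  shows "mgf F s < \<infinity>"
proof -
  have "ereal s < Sup {ereal \<gamma> | \<gamma>. mgf F \<gamma> < \<infinity>}"
    using assms unfolding gamma_hat_def by simp
  then obtain s' where "mgf F s' < \<infinity>" "s < s'"
    by (auto simp: less_Sup_iff)
  then show ?thesis
    using mgf_mono[of s s'] by auto
qed

lemma mgf_le_if_le_below:
  assumes "0 < g" and le: "\<And>s. 0 < s \<Longrightarrow> s < g \<Longrightarrow> mgf F s \<le> B"
  shows "mgf F g \<le> B"
proof -
  define s where "s n = g - g / real (Suc (Suc n))" for n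
  have s: "0 < s n" "s n < g" for n
    using \<open>0 < g\<close> by (auto simp: s_def field_simps intro: add_pos_nonneg)
  have "incseq s"
    using \<open>0 < g\<close> by (intro incseq_SucI) (simp add: s_def frac_le)
  have "(\<lambda>n. g / real (Suc (Suc n))) \<longlonglongrightarrow> 0"
    using LIMSEQ_Suc[OF LIMSEQ_Suc[OF lim_const_over_n[of g]]] .
  then have "s \<longlonglongrightarrow> g"
    unfolding s_def using tendsto_diff[OF tendsto_const] by fastforce
  have "(\<lambda>n. \<integral>\<^sup>+x. ennreal (exp (s n * max x 0)) \<partial>F) \<longlonglongrightarrow> (\<integral>\<^sup>+x. ennreal (exp (g * max x 0)) \<partial>F)"
  proof (rule nn_integral_LIMSEQ)
    show "incseq (\<lambda>n x. ennreal (exp (s n * max x 0)))"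
      using \<open>incseq s\<close> by (auto simp: incseq_def le_fun_def intro!: mult_right_mono)
    show "(\<lambda>n. ennreal (exp (s n * max x 0))) \<longlonglongrightarrow> ennreal (exp (g * max x 0))" for x
      by (intro tendsto_ennrealI tendsto_intros \<open>s \<longlonglongrightarrow> g\<close>)
  qed simp
  then have "(\<lambda>n. mgf F (s n)) \<longlonglongrightarrow> mgf F g"
    by (simp add: mgf_eq_max)
  then show ?thesis
    by (rule LIMSEQ_le_const2) (use le s in auto)
qed

lemma tail_le_mgf:
  assumes "0 \<le> s"
  shows "ennreal (exp (s * x) * tail F x) \<le> mgf F s"
proof -
  have "ennreal (exp (s * x) * tail F x) = (\<integral>\<^sup>+z. ennreal (exp (s * x)) * indicator {x<..} z \<partial>F)"
    using tail_pos[THEN less_imp_le] by (simp add: nn_integral_cmult emeasure_Ioi ennreal_mult)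
  also have "\<dots> \<le> mgf F s"
    unfolding mgf_def using assms
    by (intro nn_integral_mono) (auto simp: indicator_def intro!: mult_left_mono)
  finally show ?thesis .
qed

lemma mgf_le_if_tail_convolution_le:
  assumes "0 \<le> s" "mgf F s < \<infinity>" "0 \<le> C" "0 \<le> x0"
    and tail: "\<And>a. x0 \<le> a \<Longrightarrow> tail (F \<star> F) a \<le> C * tail F a"
  shows "mgf F s \<le> ennreal (exp (s * x0) + C)"
proof -
  define k where "k z = exp (s * max z 0)" for z
  obtain r where r: "mgf F s = ennreal r" "1 \<le> r"
    using assms(2) one_le_mgf[OF assms(1)] by (cases "mgf F s") (auto simp flip: ennreal_1)
  have [measurable]: "k \<in> borel_measurable borel"
    unfolding k_def by measurable
  have "(\<integral>\<^sup>+z. k z \<partial>(F \<star> F)) = mgf F s * mgf F s"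
    unfolding mgf_eq_max k_def
    by (rule nn_integral_convolution_eq_mult) (auto simp: distrib_left exp_add ennreal_mult)
  moreover have "1 * (\<integral>\<^sup>+z. k z \<partial>(F \<star> F)) \<le> 1 * emeasure (F \<star> F) (space (F \<star> F)) * k x0 + C * (\<integral>\<^sup>+z. k z \<partial>F)"
  proof (rule nn_integral_le_if_tail_le[OF finite_measure_convolution sets_convolution
        finite_measure_axioms sets_F])
    show "mono k" "continuous_on UNIV k"
      using \<open>0 \<le> s\<close> unfolding k_def by (auto intro!: monoI mult_left_mono continuous_intros)
    show "0 \<le> k z" for z
      by (simp add: k_def)
    show "1 * emeasure (F \<star> F) {a<..} \<le> ennreal C * emeasure F {a<..}" if "x0 \<le> a" for a
      using ennreal_leI[OF tail[OF that]] \<open>0 \<le> C\<close> tail_pos[of a]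
      by (simp add: emeasure_Ioi emeasure_convolution_Ioi ennreal_mult)
  qed
  ultimately have "ennreal (r * r) \<le> ennreal (exp (s * x0) + C * r)"
    using r \<open>0 \<le> C\<close> \<open>0 \<le> x0\<close> prob_space.emeasure_space_1[OF prob_space_convolution]
    by (simp add: k_def mgf_eq_max[symmetric] ennreal_mult)
  then have "r * r \<le> exp (s * x0) + C * r"
    using r \<open>0 \<le> C\<close> by (subst (asm) ennreal_le_iff) auto
  also have "\<dots> \<le> (exp (s * x0) + C) * r"
    using mult_left_mono[OF r(2), of "exp (s * x0)"] by (simp add: distrib_right)
  finally have "r \<le> exp (s * x0) + C"
    using r(2) by (simp add: mult_right_le_imp_le)
  then show ?thesis
    using r(1) by (simp add: ennreal_leI)
qed

lemma mgf_finite_if_tail_convolution_le: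
  assumes gh: "gamma_hat F = ereal \<gamma>" and "0 \<le> \<gamma>" "0 \<le> C"
    and ev: "eventually (\<lambda>a. tail (F \<star> F) a \<le> C * tail F a) at_top"
  shows "mgf F \<gamma> < \<infinity>"
proof (cases "\<gamma> = 0")
  case False
  obtain x0 where x0: "0 \<le> x0" "\<And>a. x0 \<le> a \<Longrightarrow> tail (F \<star> F) a \<le> C * tail F a"
    using eventually_at_top_nonnegE[OF ev] by blast
  have "mgf F \<gamma> \<le> ennreal (exp (\<gamma> * x0) + C)"
  proof (rule mgf_le_if_le_below)
    show "0 < \<gamma>"
      using False \<open>0 \<le> \<gamma>\<close> by simp
    fix s assume s: "0 < s" "s < \<gamma>"
    have "mgf F s \<le> ennreal (exp (s * x0) + C)"
      using s \<open>0 \<le> C\<close> x0 mgf_finite_below_gamma_hat[OF gh s(2)]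
      by (intro mgf_le_if_tail_convolution_le) auto
    also have "\<dots> \<le> ennreal (exp (\<gamma> * x0) + C)"
      using s x0(1) by (auto intro!: ennreal_leI mult_right_mono)
    finally show "mgf F s \<le> ennreal (exp (\<gamma> * x0) + C)" .
  qed
  then show ?thesis
    using le_less_trans by fastforce
qed (simp add: mgf_zero)

lemma mgf_infinite_above_tail_decay_rate:
  assumes "0 \<le> \<gamma>" "\<gamma> < s"
    and ratio: "((\<lambda>x. tail F (x + 1) / tail F x) \<longlongrightarrow> exp (- \<gamma>)) at_top"
  shows "mgf F s = \<infinity>"
proof (rule ccontr)
  assume "mgf F s \<noteq> \<infinity>"
  then obtain M where M: "mgf F s = ennreal M" "0 \<le> M"
    by (cases "mgf F s") auto
  define \<delta> where "\<delta> = (s - \<gamma>) / 2"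
  have "0 < \<delta>"
    using assms by (simp add: \<delta>_def)
  then have "exp (- \<gamma> - \<delta>) < exp (- \<gamma>)"
    by simp
  from order_tendstoD(1)[OF ratio this] obtain N
    where N: "\<And>x. N \<le> x \<Longrightarrow> exp (- \<gamma> - \<delta>) < tail F (x + 1) / tail F x"
    by (auto simp: eventually_at_top_linorder)
  have step: "exp (- \<gamma> - \<delta>) * tail F x \<le> tail F (x + 1)" if "N \<le> x" for x
    using N[OF that] tail_pos[of x] by (simp add: field_simps)
  define K where "K = exp (s * N) * tail F N"
  have "0 < K"
    using tail_pos by (simp add: K_def)
  have bound: "K * exp (\<delta> * m) \<le> M" for m :: nat
  proof -
    have "K * exp (\<delta> * m) = exp (s * (N + m)) * (exp (- \<gamma> - \<delta>) ^ m * tail F N)"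
      by (simp add: K_def \<delta>_def algebra_simps flip: exp_add exp_of_nat_mult)
    also have "\<dots> \<le> exp (s * (N + m)) * tail F (N + m)"
      using geometric_lower_bound[of _ N "tail F", OF _ step] by simp
    also have "\<dots> \<le> M"
      using tail_le_mgf[of s "N + m"] assms M by simp
    finally show ?thesis .
  qed
  obtain m :: nat where "M / (K * \<delta>) < m"
    using reals_Archimedean2 by blast
  then have "M < K * (\<delta> * m)"
    using \<open>0 < K\<close> \<open>0 < \<delta>\<close> by (simp add: field_simps)
  also have "\<dots> < K * exp (\<delta> * m)"
    using \<open>0 < K\<close> exp_ge_add_one_self[of "\<delta> * m"] by (intro mult_strict_left_mono) linarith+
  finally show False
    using bound[of m] by simp
qed

lemma gamma_hat_eq_if_tail_decay_rate:
  assumes "0 \<le> \<gamma>" "mgf F \<gamma> < \<infinity>"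
    and "((\<lambda>x. tail F (x + 1) / tail F x) \<longlongrightarrow> exp (- \<gamma>)) at_top"
  shows "gamma_hat F = ereal \<gamma>"
  using assms by (intro gamma_hat_eqI mgf_infinite_above_tail_decay_rate)

lemma emeasure_convolution_Ioi_ge:
  assumes "2 * A < x"
  shows "2 * (\<integral>\<^sup>+y. indicator {..A} y * emeasure F {x - y<..} \<partial>F) \<le> emeasure (F \<star> F) {x<..}"
proof -
  interpret pair_sigma_finite F F ..
  let ?I = "\<lambda>u v. indicator {x<..} (u + v) :: ennreal"
  have "(\<integral>\<^sup>+v. indicator {..A} u * ?I u v \<partial>F) = indicator {..A} u * emeasure F {x - u<..}" for u
  proof -
    have "(\<integral>\<^sup>+v. ?I u v \<partial>F) = (\<integral>\<^sup>+v. indicator {x - u<..} v \<partial>F)"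
      by (intro nn_integral_cong) (auto simp: indicator_def)
    then show ?thesis
      by (simp add: nn_integral_cmult)
  qed
  then have split: "(\<integral>\<^sup>+u. \<integral>\<^sup>+v. indicator {..A} u * ?I u v \<partial>F \<partial>F)
      = (\<integral>\<^sup>+y. indicator {..A} y * emeasure F {x - y<..} \<partial>F)"
    by simp
  \<comment> \<open>the events \<open>u \<le> A\<close> and \<open>v \<le> A\<close> are disjoint on \<open>{u + v > x}\<close> since \<open>2 * A < x\<close>\<close>
  have "2 * (\<integral>\<^sup>+y. indicator {..A} y * emeasure F {x - y<..} \<partial>F)
      = (\<integral>\<^sup>+u. \<integral>\<^sup>+v. indicator {..A} u * ?I u v \<partial>F \<partial>F) + (\<integral>\<^sup>+v. \<integral>\<^sup>+u. indicator {..A} v * ?I v u \<partial>F \<partial>F)"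
    by (simp add: split mult_2)
  also have "\<dots> = (\<integral>\<^sup>+u. \<integral>\<^sup>+v. indicator {..A} u * ?I u v \<partial>F \<partial>F) + (\<integral>\<^sup>+u. \<integral>\<^sup>+v. indicator {..A} v * ?I u v \<partial>F \<partial>F)"
    by (subst Fubini') (simp_all add: add.commute)
  also have "\<dots> = (\<integral>\<^sup>+u. \<integral>\<^sup>+v. indicator {..A} u * ?I u v + indicator {..A} v * ?I u v \<partial>F \<partial>F)"
    by (simp add: nn_integral_add)
  also have "\<dots> \<le> (\<integral>\<^sup>+u. \<integral>\<^sup>+v. ?I u v \<partial>F \<partial>F)"
    using assms by (intro nn_integral_mono) (auto simp: indicator_def)
  also have "\<dots> = emeasure (F \<star> F) {x<..}"
    by (simp add: nn_integral_convolution_self[symmetric])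
  finally show ?thesis .
qed

lemma nn_integral_tail_ratio_le:
  assumes "2 * A < x"
  shows "2 * (\<integral>\<^sup>+y. indicator {..A} y * ennreal (tail F (x - y) / tail F x) \<partial>F)
    \<le> ennreal (tail (F \<star> F) x / tail F x)"
proof -
  have "ennreal (tail F x) * (indicator {..A} y * ennreal (tail F (x - y) / tail F x))
      = indicator {..A} y * emeasure F {x - y<..}" for y
    using tail_pos[of x] tail_pos[of "x - y"]
    by (simp add: emeasure_Ioi mult.left_commute split: split_indicator flip: ennreal_mult)
  then have "ennreal (tail F x) * (\<integral>\<^sup>+y. indicator {..A} y * ennreal (tail F (x - y) / tail F x) \<partial>F)
      = (\<integral>\<^sup>+y. indicator {..A} y * emeasure F {x - y<..} \<partial>F)"
    by (subst nn_integral_cmult[symmetric]) simp_all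
  then have "ennreal (tail F x) * (2 * (\<integral>\<^sup>+y. indicator {..A} y * ennreal (tail F (x - y) / tail F x) \<partial>F))
      = 2 * (\<integral>\<^sup>+y. indicator {..A} y * emeasure F {x - y<..} \<partial>F)"
    by (simp add: mult.left_commute)
  also have "\<dots> \<le> emeasure (F \<star> F) {x<..}"
    using assms by (rule emeasure_convolution_Ioi_ge)
  also have "\<dots> = ennreal (tail F x * (tail (F \<star> F) x / tail F x))"
    using tail_pos[of x] by (simp add: emeasure_convolution_Ioi)
  also have "\<dots> = ennreal (tail F x) * ennreal (tail (F \<star> F) x / tail F x)"
    by (rule ennreal_mult) (simp_all add: tail_def)
  finally show ?thesis
    using tail_pos[of x] by (subst (asm) ennreal_mult_le_mult_iff) auto
qed

lemma twice_mgf_le_tail_convolution_ratio: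
  assumes ratio: "\<And>y. ((\<lambda>x. tail F (x + y) / tail F x) \<longlongrightarrow> exp (- \<gamma> * y)) at_top"
    and conv_ratio: "((\<lambda>x. tail (F \<star> F) x / tail F x) \<longlongrightarrow> c) at_top"
  shows "2 * mgf F \<gamma> \<le> ennreal c"
proof -
  \<comment> \<open>Fatou's lemma along \<open>x = n\<close>, cutting the integral at \<open>n / 3\<close> to make room for \<open>nn_integral_tail_ratio_le\<close>\<close>
  define f where "f n y = 2 * (indicator {..real n / 3} y * ennreal (tail F (real n - y) / tail F (real n)))"
    for n :: nat and y
  have [measurable]: "f n \<in> borel_measurable borel" for n
    unfolding f_def by measurable
  have lim: "(\<lambda>n. f n y) \<longlonglongrightarrow> 2 * ennreal (exp (\<gamma> * y))" for y
  proof -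
    obtain N :: nat where "3 * y \<le> real N"
      using real_arch_simple by blast
    then have ev: "eventually (\<lambda>n. y \<le> real n / 3) sequentially"
      unfolding eventually_sequentially by (intro exI[of _ N]) auto
    have "(\<lambda>n. tail F (real n + - y) / tail F (real n)) \<longlonglongrightarrow> exp (- \<gamma> * - y)"
      by (rule filterlim_compose[OF ratio filterlim_real_sequentially])
    then have "(\<lambda>n. ennreal (tail F (real n - y) / tail F (real n))) \<longlonglongrightarrow> ennreal (exp (\<gamma> * y))"
      by (intro tendsto_ennrealI) simp
    then have "(\<lambda>n. 2 * ennreal (tail F (real n - y) / tail F (real n))) \<longlonglongrightarrow> 2 * ennreal (exp (\<gamma> * y))"
      by (intro ennreal_tendsto_cmult) simp_all
    moreover from ev have "eventually (\<lambda>n. 2 * ennreal (tail F (real n - y) / tail F (real n)) = f n y) sequentially"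
      by eventually_elim (simp add: f_def)
    ultimately show ?thesis
      by (rule Lim_transform_eventually)
  qed
  have le: "(\<integral>\<^sup>+y. f n y \<partial>F) \<le> ennreal (tail (F \<star> F) (real n) / tail F (real n))" if "0 < n" for n
    using nn_integral_tail_ratio_le[of "real n / 3" "real n"] that
    unfolding f_def by (subst nn_integral_cmult) (simp_all add: tail_antimono)
  have "liminf (\<lambda>n. f n y) = 2 * ennreal (exp (\<gamma> * y))" for y
    using lim by (intro lim_imp_Liminf) auto
  then have "2 * mgf F \<gamma> = (\<integral>\<^sup>+y. liminf (\<lambda>n. f n y) \<partial>F)"
    by (simp add: mgf_def nn_integral_cmult)
  also have "\<dots> \<le> liminf (\<lambda>n. \<integral>\<^sup>+y. f n y \<partial>F)"
    by (rule nn_integral_liminf) (simp add: f_def)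
  also have "\<dots> \<le> liminf (\<lambda>n. ennreal (tail (F \<star> F) (real n) / tail F (real n)))"
    using le by (intro Liminf_mono) (auto simp: eventually_sequentially intro: exI[of _ 1])
  also have "\<dots> = ennreal c"
    by (intro lim_imp_Liminf tendsto_ennrealI filterlim_compose[OF conv_ratio filterlim_real_sequentially]) simp
  finally show ?thesis .
qed

lemma nn_integral_tilt_excess_finite:
  assumes "0 \<le> l" "0 \<le> T" "mgf F g < \<infinity>"
  shows "(\<integral>\<^sup>+z. tilt_excess g l T z \<partial>F) < \<infinity>"
proof -
  have "(\<integral>\<^sup>+z. tilt_excess g l T z \<partial>F) \<le> (\<integral>\<^sup>+z. ennreal (exp (g * z)) * ennreal (exp (l * T) - 1) \<partial>F)"
  proof (rule nn_integral_mono)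
    fix z
    have "ennreal (tilt_excess g l T z) \<le> ennreal (exp (g * z) * (exp (l * T) - 1))"
      using tilt_excess_le_truncation[OF assms(1)] by (rule ennreal_leI)
    also have "\<dots> = ennreal (exp (g * z)) * ennreal (exp (l * T) - 1)"
      using assms(1,2) by (simp add: ennreal_mult)
    finally show "ennreal (tilt_excess g l T z) \<le> ennreal (exp (g * z)) * ennreal (exp (l * T) - 1)" .
  qed
  also have "\<dots> = mgf F g * ennreal (exp (l * T) - 1)"
    unfolding mgf_def by (rule nn_integral_multc) simp
  finally show ?thesis
    using assms(3) by (simp add: ennreal_mult_less_top le_less_trans)
qed

lemma nn_integral_tilt_excess_add_one_le:
  assumes "0 \<le> l" "0 \<le> T"
  shows "(\<integral>\<^sup>+z. tilt_excess g l (T + 1) z \<partial>F)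
    \<le> ennreal (exp l) * (\<integral>\<^sup>+z. tilt_excess g l T z \<partial>F) + ennreal (exp l - 1) * mgf F g"
proof -
  have "(\<integral>\<^sup>+z. tilt_excess g l (T + 1) z \<partial>F)
      \<le> (\<integral>\<^sup>+z. ennreal (exp l) * tilt_excess g l T z + ennreal (exp l - 1) * exp (g * z) \<partial>F)"
  proof (rule nn_integral_mono)
    fix z
    have "ennreal (tilt_excess g l (T + 1) z) \<le> ennreal (exp l * tilt_excess g l T z + (exp l - 1) * exp (g * z))"
      using tilt_excess_add_one_le[OF assms(1)] by (rule ennreal_leI)
    also have "\<dots> = ennreal (exp l) * tilt_excess g l T z + ennreal (exp l - 1) * exp (g * z)"
      using tilt_excess_nonneg[OF assms] assms by (simp add: ennreal_plus ennreal_mult)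
    finally show "ennreal (tilt_excess g l (T + 1) z)
        \<le> ennreal (exp l) * tilt_excess g l T z + ennreal (exp l - 1) * exp (g * z)" .
  qed
  also have "\<dots> = ennreal (exp l) * (\<integral>\<^sup>+z. tilt_excess g l T z \<partial>F) + ennreal (exp l - 1) * mgf F g"
    unfolding mgf_def
    by (simp add: nn_integral_add nn_integral_cmult tilt_excess_def)
  finally show ?thesis .
qed

lemma mgf_le_if_tilt_excess_bounded:
  assumes "0 \<le> l" and bound: "\<And>n::nat. (\<integral>\<^sup>+z. tilt_excess g l n z \<partial>F) \<le> B"
  shows "mgf F (g + l) \<le> mgf F g + B"
proof -
  define k where "k z = exp (g * z) * (exp (l * max z 0) - 1)" for z
  have lim: "(\<lambda>n. ennreal (tilt_excess g l (real n) z)) \<longlonglongrightarrow> ennreal (k z)" for z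
    using tilt_excess_eventually_eq[of g l z]
    by (intro tendsto_eventually) (auto simp: k_def elim: eventually_mono)
  have "mgf F (g + l) = (\<integral>\<^sup>+z. ennreal (exp (g * z)) + ennreal (k z) \<partial>F)"
    unfolding mgf_def k_def using \<open>0 \<le> l\<close>
    by (intro nn_integral_cong_AE AE_mp[OF AE_nonneg AE_I2])
      (auto simp: algebra_simps exp_add simp flip: ennreal_plus)
  also have "\<dots> = mgf F g + (\<integral>\<^sup>+z. k z \<partial>F)"
    unfolding mgf_def by (simp add: nn_integral_add k_def)
  also have "(\<integral>\<^sup>+z. k z \<partial>F) = (\<integral>\<^sup>+z. liminf (\<lambda>n. ennreal (tilt_excess g l (real n) z)) \<partial>F)"
    using lim by (intro nn_integral_cong lim_imp_Liminf[symmetric]) auto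
  also have "\<dots> \<le> liminf (\<lambda>n. \<integral>\<^sup>+z. tilt_excess g l (real n) z \<partial>F)"
    by (rule nn_integral_liminf) (simp add: tilt_excess_def)
  also have "\<dots> \<le> liminf (\<lambda>_. B)"
    by (rule Liminf_mono) (simp add: bound)
  finally show ?thesis
    by (simp add: Liminf_const add_left_mono)
qed

lemma nn_integral_convolution_tilt_excess_le:
  assumes "0 \<le> l" "0 \<le> T"
  shows "mgf F g * mgf F g + (\<integral>\<^sup>+z. tilt_excess g l T z \<partial>(F \<star> F))
    \<le> (mgf F g + (\<integral>\<^sup>+z. tilt_excess g l T z \<partial>F)) * (mgf F g + (\<integral>\<^sup>+z. tilt_excess g l T z \<partial>F))"
proof -
  define h where "h z = exp (g * z) + tilt_excess g l T z" for z
  have h_nonneg: "0 \<le> h z" for z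
    using tilt_excess_nonneg[OF assms] by (simp add: h_def add_nonneg_nonneg)
  have split: "ennreal (h z) = ennreal (exp (g * z)) + ennreal (tilt_excess g l T z)" for z
    using tilt_excess_nonneg[OF assms] by (simp add: h_def ennreal_plus)
  have [measurable]: "h \<in> borel_measurable borel"
    "(\<lambda>z. ennreal (tilt_excess g l T z)) \<in> borel_measurable borel"
    unfolding h_def tilt_excess_def by measurable
  have "(\<integral>\<^sup>+z. h z \<partial>(F \<star> F)) = mgf (F \<star> F) g + (\<integral>\<^sup>+z. tilt_excess g l T z \<partial>(F \<star> F))"
    unfolding split mgf_def
    by (rule nn_integral_add) (simp_all only: measurable_convolution2, measurable)
  then have "mgf F g * mgf F g + (\<integral>\<^sup>+z. tilt_excess g l T z \<partial>(F \<star> F)) = (\<integral>\<^sup>+z. h z \<partial>(F \<star> F))"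
    by (simp add: mgf_convolution)
  also have "\<dots> \<le> (\<integral>\<^sup>+z. h z \<partial>F) * (\<integral>\<^sup>+z. h z \<partial>F)"
  proof (rule nn_integral_convolution_le_mult)
    fix x y :: real assume "0 \<le> x" "0 \<le> y"
    then have "h (x + y) \<le> h x * h y"
      unfolding h_def by (rule exp_plus_tilt_excess_submult[OF assms])
    then show "ennreal (h (x + y)) \<le> ennreal (h x) * ennreal (h y)"
      using h_nonneg by (simp add: ennreal_leI flip: ennreal_mult)
  qed measurable
  also have "(\<integral>\<^sup>+z. h z \<partial>F) = mgf F g + (\<integral>\<^sup>+z. tilt_excess g l T z \<partial>F)"
    unfolding split mgf_def by (rule nn_integral_add) measurable
  finally show ?thesis .
qed

lemma tilt_excess_moment_ineq:
  assumes "0 \<le> g" "0 \<le> l" "0 \<le> T" "0 \<le> c" "0 \<le> x0"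
    and tail: "\<And>a. x0 \<le> a \<Longrightarrow> c * tail F a \<le> tail (F \<star> F) a"
    and p: "mgf F g = ennreal p" "0 \<le> p"
    and d: "(\<integral>\<^sup>+z. tilt_excess g l T z \<partial>F) = ennreal d" "0 \<le> d"
  shows "c * d \<le> 2 * p * d + d * d + c * tilt_excess g l T x0"
proof -
  define K where "K = (\<integral>\<^sup>+z. tilt_excess g l T z \<partial>(F \<star> F))"
  have "ennreal (p * p) + K \<le> ennreal ((p + d) * (p + d))"
    using nn_integral_convolution_tilt_excess_le[OF assms(2,3), of g] p d
    by (simp add: K_def ennreal_mult)
  moreover from this obtain k where k: "K = ennreal k" "0 \<le> k"
    by (cases K) (auto simp: top_add top_unique)
  ultimately have "ennreal (p * p + k) \<le> ennreal ((p + d) * (p + d))"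
    using p d by simp
  then have up: "p * p + k \<le> (p + d) * (p + d)"
    using p d by simp
  have "ennreal c * (\<integral>\<^sup>+z. tilt_excess g l T z \<partial>F)
      \<le> ennreal c * emeasure F (space F) * tilt_excess g l T x0 + 1 * K"
    unfolding K_def
  proof (rule nn_integral_le_if_tail_le[OF finite_measure_axioms sets_F
        finite_measure_convolution sets_convolution])
    show "mono (tilt_excess g l T)" "continuous_on UNIV (tilt_excess g l T)"
      using assms(1-3) by (simp_all add: mono_tilt_excess continuous_on_tilt_excess)
    show "0 \<le> tilt_excess g l T z" for z
      using assms(2,3) by (rule tilt_excess_nonneg)
    show "ennreal c * emeasure F {a<..} \<le> 1 * emeasure (F \<star> F) {a<..}" if "x0 \<le> a" for a
      using ennreal_leI[OF tail[OF that]] \<open>0 \<le> c\<close> tail_pos[of a]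
      by (simp add: emeasure_Ioi emeasure_convolution_Ioi ennreal_mult)
  qed
  then have "ennreal (c * d) \<le> ennreal (c * tilt_excess g l T x0 + k)"
    using d k \<open>0 \<le> c\<close> tilt_excess_nonneg[OF assms(2,3), of g x0] emeasure_space_1
    by (simp add: ennreal_mult)
  then have lo: "c * d \<le> c * tilt_excess g l T x0 + k"
    using k \<open>0 \<le> c\<close> tilt_excess_nonneg[OF assms(2,3), of g x0]
    by (subst (asm) ennreal_le_iff) auto
  from up lo show ?thesis
    by (simp add: algebra_simps)
qed

lemma tilt_excess_moment_window:
  fixes d :: "nat \<Rightarrow> real"
  assumes gh: "gamma_hat F = ereal \<gamma>" and p: "mgf F \<gamma> = ennreal p" "0 \<le> p"
    and l: "0 < l" and a: "0 < a" "(exp l - 1) * (p + a) < a"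
    and d: "\<And>n. (\<integral>\<^sup>+z. tilt_excess \<gamma> l (real n) z \<partial>F) = ennreal (d n)" "\<And>n. 0 \<le> d n"
  obtains n where "a \<le> d n" "d n \<le> 2 * a"
proof -
  have "d 0 < a"
    using d(1)[of 0] d(2)[of 0] a(1) by (simp add: tilt_excess_def)
  obtain N where "a \<le> d N"
  proof (rule ccontr)
    assume "\<not> thesis"
    with that have "ennreal (d n) \<le> ennreal a" for n
      by (meson ennreal_leI not_le order.strict_implies_order)
    then have "mgf F (\<gamma> + l) \<le> ennreal p + ennreal a"
      using mgf_le_if_tilt_excess_bounded[of l \<gamma> "ennreal a"] l p d(1) by simp
    moreover have "mgf F (\<gamma> + l) = \<infinity>"
      using mgf_infinite_above_gamma_hat[OF gh] l by simp
    ultimately show False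
      by (simp add: top_unique)
  qed
  moreover have step: "d (Suc n) \<le> 2 * a" if "d n < a" for n
  proof -
    have "ennreal (d (Suc n)) \<le> ennreal (exp l * d n + (exp l - 1) * p)"
      using nn_integral_tilt_excess_add_one_le[of l "real n" \<gamma>] l d(1)[of "Suc n"] d(1)[of n] d(2)[of n] p
      by (simp add: add.commute ennreal_mult)
    then have "d (Suc n) \<le> exp l * d n + (exp l - 1) * p"
      using l p d(2)[of n] by (subst (asm) ennreal_le_iff) auto
    also have "\<dots> = d n + (exp l - 1) * (p + d n)"
      by (simp add: algebra_simps)
    also have "\<dots> \<le> a + (exp l - 1) * (p + a)"
      using that l by (intro add_mono mult_left_mono) auto
    finally show ?thesis
      using a by linarith
  qed
  ultimately show ?thesis
    using exists_crossing[of d a N "2 * a"] \<open>d 0 < a\<close> that by blast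
qed

lemma le_twice_mgf_if_tail_convolution_ge:
  assumes gh: "gamma_hat F = ereal \<gamma>" and "0 \<le> \<gamma>"
    and p: "mgf F \<gamma> = ennreal p" "0 \<le> p"
    and ev: "eventually (\<lambda>a. c * tail F a \<le> tail (F \<star> F) a) at_top"
  shows "c \<le> 2 * p"
proof (rule ccontr)
  assume "\<not> c \<le> 2 * p"
  define e where "e = c - 2 * p"
  have "0 < e" "0 \<le> c"
    using \<open>\<not> c \<le> 2 * p\<close> p(2) by (simp_all add: e_def)
  obtain x0 where x0: "0 \<le> x0" "\<And>a. x0 \<le> a \<Longrightarrow> c * tail F a \<le> tail (F \<star> F) a"
    using eventually_at_top_nonnegE[OF ev] by blast
  define \<epsilon> where "\<epsilon> = min (e / 4) (e * e / 8)"
  have "0 < \<epsilon>"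
    using \<open>0 < e\<close> by (simp add: \<epsilon>_def)
  then obtain l where l: "0 < l" "(exp l - 1) * (p + e / 4) < \<epsilon>"
    "(exp (l * x0) - 1) * (c * exp (\<gamma> * x0)) < \<epsilon>"
    by (rule exists_small_exp_increment)
  define d where "d n = enn2real (\<integral>\<^sup>+z. tilt_excess \<gamma> l (real n) z \<partial>F)" for n
  have d: "(\<integral>\<^sup>+z. tilt_excess \<gamma> l (real n) z \<partial>F) = ennreal (d n)" "0 \<le> d n" for n
    using nn_integral_tilt_excess_finite[of l "real n" \<gamma>] l(1) p by (auto simp: d_def less_top)
  have small_step: "(exp l - 1) * (p + e / 4) < e / 4"
    using l(2) by (simp add: \<epsilon>_def)
  obtain n where n: "e / 4 \<le> d n" "d n \<le> 2 * (e / 4)"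
    using tilt_excess_moment_window[OF gh p l(1) _ small_step d] \<open>0 < e\<close> by auto
  have "c * d n \<le> 2 * p * d n + d n * d n + c * tilt_excess \<gamma> l n x0"
    using x0 l(1) by (intro tilt_excess_moment_ineq[OF \<open>0 \<le> \<gamma>\<close> _ _ \<open>0 \<le> c\<close>] p d) auto
  moreover have "c * tilt_excess \<gamma> l n x0 \<le> (exp (l * x0) - 1) * (c * exp (\<gamma> * x0))"
    using tilt_excess_le[where g = \<gamma> and T = "real n" and z = x0] l(1) x0(1) \<open>0 \<le> c\<close>
    by (simp add: mult_left_mono mult_ac)
  moreover have "e / 4 * (e / 2) \<le> d n * (e - d n)"
    using n \<open>0 < e\<close> by (intro mult_mono) auto
  moreover have "c * d n = e * d n + 2 * p * d n" "d n * (e - d n) = e * d n - d n * d n"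
    by (simp_all add: e_def algebra_simps)
  ultimately show False
    using l(3) min.cobounded2[of "e / 4" "e * e / 8"] unfolding \<epsilon>_def by linarith
qed

lemma tail_convolution_ratio_eq_twice_mgf:
  assumes gh: "gamma_hat F = ereal \<gamma>" and "0 \<le> \<gamma>"
    and ratio: "\<And>y. ((\<lambda>x. tail F (x + y) / tail F x) \<longlongrightarrow> exp (- \<gamma> * y)) at_top"
    and conv_ratio: "((\<lambda>x. tail (F \<star> F) x / tail F x) \<longlongrightarrow> c) at_top"
  shows "mgf F \<gamma> < \<infinity>" and "c = 2 * enn2real (mgf F \<gamma>)"
proof -
  have below: "eventually (\<lambda>a. c' * tail F a \<le> tail (F \<star> F) a) at_top" if "c' < c" for c'
    using order_tendstoD(1)[OF conv_ratio that] by eventually_elim (simp add: field_simps tail_pos)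
  have above: "eventually (\<lambda>a. tail (F \<star> F) a \<le> (c + 1) * tail F a) at_top"
    using order_tendstoD(2)[OF conv_ratio less_add_one[of c]] by eventually_elim (simp add: field_simps tail_pos)
  have "0 \<le> c"
    using conv_ratio by (rule tendsto_lowerbound) (simp_all add: tail_def)
  then show fin: "mgf F \<gamma> < \<infinity>"
    using above by (intro mgf_finite_if_tail_convolution_le[OF gh \<open>0 \<le> \<gamma>\<close>]) simp_all
  define p where "p = enn2real (mgf F \<gamma>)"
  have p: "mgf F \<gamma> = ennreal p" "0 \<le> p"
    using fin by (simp_all add: p_def less_top)
  have "c' \<le> 2 * p" if "c' < c" for c'
    using below[OF that] by (rule le_twice_mgf_if_tail_convolution_ge[OF gh \<open>0 \<le> \<gamma>\<close> p])
  then have "c \<le> 2 * p"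
    by (rule dense_le)
  moreover have "ennreal (2 * p) \<le> ennreal c"
    using twice_mgf_le_tail_convolution_ratio[OF ratio conv_ratio] p by (simp add: ennreal_mult)
  then have "2 * p \<le> c"
    using \<open>0 \<le> c\<close> by simp
  ultimately show "c = 2 * enn2real (mgf F \<gamma>)"
    by (simp add: p_def)
qed

end

theorem theorem7:
  fixes F :: "real measure" and \<gamma> :: real
  assumes "prob_space F"
    and "sets F = sets borel"
    and "emeasure F {..<0} = 0"
    and "\<forall>x. tail F x > 0"
    and "\<gamma> \<ge> 0"
  shows "class_S \<gamma> F \<longleftrightarrow>
           (ereal \<gamma> = gamma_hat F \<and>
            (\<exists>c::real. c \<ge> 2 \<and>
               (\<lambda>x. tail (F \<star> F) x) \<sim>[at_top] (\<lambda>x. c * tail F x)) \<and>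
            (\<forall>y::real. Liminf at_top (\<lambda>x. ereal (tail F (x - y) / tail F x))
                         \<ge> ereal (exp (\<gamma> * y))))"
proof -
  interpret unbounded_nonneg_distribution F
    by (intro unbounded_nonneg_distribution.intro unbounded_nonneg_distribution_axioms.intro assms(1-3))
      (use assms(4) in blast)
  show ?thesis (is "_ \<longleftrightarrow> ?conditions")
  proof
    assume "class_S \<gamma> F"
    then have fin: "mgf F \<gamma> < \<infinity>"
      and ratio: "\<And>y. ((\<lambda>x. tail F (x + y) / tail F x) \<longlongrightarrow> exp (- \<gamma> * y)) at_top"
      and equiv: "(\<lambda>x. tail (F \<star> F) x) \<sim>[at_top] (\<lambda>x. 2 * enn2real (mgf F \<gamma>) * tail F x)"
      by (auto simp: class_S_def)
    have "gamma_hat F = ereal \<gamma>"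
      using \<open>0 \<le> \<gamma>\<close> fin ratio[of 1] by (intro gamma_hat_eq_if_tail_decay_rate) simp_all
    moreover have "2 \<le> 2 * enn2real (mgf F \<gamma>)"
      using enn2real_mono[OF one_le_mgf[OF \<open>0 \<le> \<gamma>\<close>]] fin by simp
    moreover have "Liminf at_top (\<lambda>x. ereal (tail F (x - y) / tail F x)) = ereal (exp (\<gamma> * y))" for y
      using ratio[of "- y"] by (intro lim_imp_Liminf) (simp_all add: lim_ereal)
    ultimately show ?conditions
      using equiv by (auto intro!: exI[of _ "2 * enn2real (mgf F \<gamma>)"])
  next
    assume ?conditions
    then obtain c where gh: "gamma_hat F = ereal \<gamma>" and "2 \<le> c"
      and equiv: "(\<lambda>x. tail (F \<star> F) x) \<sim>[at_top] (\<lambda>x. c * tail F x)"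
      and Liminf: "\<And>y. ereal (exp (\<gamma> * y)) \<le> Liminf at_top (\<lambda>x. ereal (tail F (x - y) / tail F x))"
      by auto
    have ratio: "((\<lambda>x. tail F (x + y) / tail F x) \<longlongrightarrow> exp (- \<gamma> * y)) at_top" for y
      using tail_pos Liminf by (rule tendsto_shift_ratio_if_Liminf_ge)
    have "((\<lambda>x. tail (F \<star> F) x / tail F x) \<longlongrightarrow> c) at_top"
      using \<open>2 \<le> c\<close> tail_pos[THEN less_imp_neq] by (intro tendsto_ratio_if_asymp_equiv[OF equiv]) auto
    with gh \<open>0 \<le> \<gamma>\<close> ratio have "mgf F \<gamma> < \<infinity>" "c = 2 * enn2real (mgf F \<gamma>)"
      by (rule tail_convolution_ratio_eq_twice_mgf)+
    then show "class_S \<gamma> F"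
      using ratio equiv by (simp add: class_S_def)
  qed
qed

end
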